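(* Let $p\in[1,\infty)$ and $G\in\mathcal{P}_*(\Theta)$. For every $\varepsilon>0$ there exists $n\in\mathbb{N}$ such that the measure $G^{(n)}=\sum_{l=1}^{2^n}G(\bar\Theta_{n,l})\delta_{\mu_{n+1,2l-1}}$ satisfies $W_p(G^{(n)},G)<\varepsilon$.
   Context: $\Theta\subseteq\mathbb{R}$ is $\mathbb{R}$, a closed half-line, or a compact interval with nonempty interior. $\mathcal{P}_*(\Theta)$: Borel probability measures on $\Theta$ whose support is a non-degenerate compact interval. $W_p$ is the Wasserstein distance of order $p$. $G$ is identified with its distribution function; $b_G(a_1,a_2]=\int_{(a_1,a_2]}\theta\,dG/(G(a_2)-G(a_1))$ if $G(a_2)>G(a_1)$, else $a_1$. SBA: $\mu_{1,1}=\int\theta\,dG$; for $j\ge2$, $\mu_{j,2l}=\mu_{j-1,l}$, $\mu_{j,2l-1}=b_G(\mu_{j-1,l-1},\mu_{j-1,l}]$, with $\mu_{j,0}=\inf\Theta$, $\mu_{j,2^j}=\sup\Theta$. $\Theta_{n,1}=[\mu_{n,0},\mu_{n,1}]$ if $\mu_{n,0}>-\infty$, else $(\mu_{n,0},\mu_{n,1}]$; $\Theta_{n,l}=(\mu_{n,l-1},\mu_{n,l}]$ for $2\le l\le 2^n-1$; $\Theta_{n,2^n}=(\mu_{n,2^n-1},\mu_{n,2^n}]$ if $\mu_{n,2^n}<\infty$, else $(\mu_{n,2^n-1},\infty)$. $\bar\Theta_{n,1}=\Theta_{n,1}\cap\operatorname{supp}(G)$, $\bar\Theta_{n,l}=\Theta_{n,l}$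 for $2\le l\le 2^n-1$, $\bar\Theta_{n,2^n}=\Theta_{n,2^n}\cap\operatorname{supp}(G)$. *)

theory Defs
  imports "HOL-Probability.Probability"
begin

text \<open>The parameter set Theta is given by its endpoints lo = inf Theta, hi = sup Theta
  (extended reals, lo < hi); Theta is the closed (in R) set of reals between them.
  This covers R, closed half-lines and compact intervals with nonempty interior.\<close>
definition Theta_set :: "ereal \<Rightarrow> ereal \<Rightarrow> real set" where
  "Theta_set lo hi = {x. lo \<le> ereal x \<and> ereal x \<le> hi}"

definition msupp :: "real measure \<Rightarrow> real set" where
  "msupp G = {x. \<forall>e>0. emeasure G (ball x e) > 0}"

definition Pstar :: "ereal \<Rightarrow> ereal \<Rightarrow> real measure set" where
  "Pstar lo hi = {G. sets G = sets borel \<and> prob_space G \<and> emeasure G (Theta_set lo hi) = 1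
                    \<and> (\<exists>a b. a < b \<and> msupp G = {a..b})}"

definition cdf_e :: "real measure \<Rightarrow> ereal \<Rightarrow> real" where
  "cdf_e G a = measure G {x. ereal x \<le> a}"

definition bG :: "real measure \<Rightarrow> ereal \<Rightarrow> ereal \<Rightarrow> ereal" where
  "bG G a1 a2 = (if cdf_e G a2 > cdf_e G a1
      then ereal ((LINT x:{x. a1 < ereal x \<and> ereal x \<le> a2}|G. x) / (cdf_e G a2 - cdf_e G a1))
      else a1)"

text \<open>Successive bisection algorithm: sba G lo hi j l = mu_{j,l} (for j \<ge> 1, 0 \<le> l \<le> 2^j).\<close>
fun sba :: "real measure \<Rightarrow> ereal \<Rightarrow> ereal \<Rightarrow> nat \<Rightarrow> nat \<Rightarrow> ereal" where
  "sba G lo hi 0 l = (if l = 0 then lo else hi)"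
| "sba G lo hi (Suc 0) l =
     (if l = 0 then lo else if l = 1 then ereal (integral\<^sup>L G (\<lambda>x. x)) else hi)"
| "sba G lo hi (Suc (Suc j)) l =
     (if l = 0 then lo
      else if l \<ge> 2 ^ Suc (Suc j) then hi
      else if even l then sba G lo hi (Suc j) (l div 2)
      else bG G (sba G lo hi (Suc j) (l div 2)) (sba G lo hi (Suc j) (l div 2 + 1)))"

text \<open>The cells Theta_{n,l} (1 \<le> l \<le> 2^n), as sets of reals; the closedness / openness
  conventions at infinite endpoints are automatic since reals are finite.\<close>
definition cell :: "real measure \<Rightarrow> ereal \<Rightarrow> ereal \<Rightarrow> nat \<Rightarrow> nat \<Rightarrow> real set" where
  "cell G lo hi n l =
     (if l = 1 then {x. sba G lo hi n 0 \<le> ereal x \<and> ereal x \<le> sba G lo hi n 1}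
      else {x. sba G lo hi n (l - 1) < ereal x \<and> ereal x \<le> sba G lo hi n l})"

definition barcell :: "real measure \<Rightarrow> ereal \<Rightarrow> ereal \<Rightarrow> nat \<Rightarrow> nat \<Rightarrow> real set" where
  "barcell G lo hi n l =
     (if l = 1 \<or> l = 2 ^ n then cell G lo hi n l \<inter> msupp G else cell G lo hi n l)"

definition approx_meas :: "real measure \<Rightarrow> ereal \<Rightarrow> ereal \<Rightarrow> nat \<Rightarrow> real measure" where
  "approx_meas G lo hi n = measure_of UNIV (sets borel)
     (\<lambda>A. \<Sum>l\<in>{1..2^n}. emeasure G (barcell G lo hi n l)
            * indicator A (real_of_ereal (sba G lo hi (Suc n) (2 * l - 1))))"

definition couplings :: "real measure \<Rightarrow> real measure \<Rightarrow> (real \<times> real) measure set" where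
  "couplings \<mu> \<nu> = {\<pi>. sets \<pi> = sets (borel :: (real \<times> real) measure)
      \<and> distr \<pi> borel fst = \<mu> \<and> distr \<pi> borel snd = \<nu>}"

definition wasserstein :: "real \<Rightarrow> real measure \<Rightarrow> real measure \<Rightarrow> ennreal" where
  "wasserstein p \<mu> \<nu> =
     (let c = (INF \<pi>\<in>couplings \<mu> \<nu>. \<integral>\<^sup>+ z. ennreal (\<bar>fst z - snd z\<bar> powr p) \<partial>\<pi>)
      in if c = \<infinity> then \<infinity> else ennreal (enn2real c powr (1 / p)))"

end

theory Submission
  imports Defs
begin

text \<open>G^(n) is the image of G under the quantizer sending the level-n cell
  (mu_{n,l-1}, mu_{n,l}] to its conditional mean mu_{n+1,2l-1}. Coupling x with its image shows
  that W_p(G^(n), G) is at most the largest cell width, measured after clipping the endpoints to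
  the support [a,b]. Since G has full support on the compact interval [a,b], there is g > 0 such
  that every subinterval of [a,b] of length eta/2 has mass at least g. Hence the conditional mean
  of a cell of width at least eta lies at distance at least eta g/2 from both of its ends, so each
  bisection step shortens such cells by eta g/2, and after finitely many levels all cells have
  width at most eta.\<close>

lemma sba_0 [simp]: "sba G lo hi n 0 = lo"
  by (induction G lo hi n "0::nat" rule: sba.induct) auto

lemma sba_top: "1 \<le> n \<Longrightarrow> 2 ^ n \<le> l \<Longrightarrow> sba G lo hi n l = hi"
  by (induction G lo hi n l rule: sba.induct) auto

lemma sba_Suc_even: "1 \<le> n \<Longrightarrow> k \<le> 2 ^ n \<Longrightarrow> sba G lo hi (Suc n) (2 * k) = sba G lo hi n k"
  by (cases n) (auto simp: sba_top)

lemma sba_Suc_odd: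
  "1 \<le> n \<Longrightarrow> k < 2 ^ n \<Longrightarrow>
    sba G lo hi (Suc n) (Suc (2 * k)) = bG G (sba G lo hi n k) (sba G lo hi n (Suc k))"
  by (cases n) auto

lemma sba_Suc_split:
  assumes "1 \<le> n" and "l < 2 ^ Suc n"
  obtains k where "k < 2 ^ n"
    and "(sba G lo hi (Suc n) l, sba G lo hi (Suc n) (Suc l)) \<in>
           {(sba G lo hi n k, bG G (sba G lo hi n k) (sba G lo hi n (Suc k))),
            (bG G (sba G lo hi n k) (sba G lo hi n (Suc k)), sba G lo hi n (Suc k))}"
proof (cases "even l")
  case True
  then obtain k where "l = 2 * k" by (auto elim: evenE)
  with assms show ?thesis
    using that[of k] sba_Suc_even[OF assms(1), of k] sba_Suc_odd[OF assms(1), of k] by auto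
next
  case False
  then obtain k where "l = Suc (2 * k)" by (auto elim: oddE)
  with assms show ?thesis
    using that[of k] sba_Suc_even[OF assms(1), of "Suc k"] sba_Suc_odd[OF assms(1), of k] by auto
qed

lemma cell_bounds:
  "x \<in> cell G lo hi n l \<Longrightarrow> sba G lo hi n (l - 1) \<le> ereal x \<and> ereal x \<le> sba G lo hi n l"
  by (auto simp: cell_def split: if_splits)

lemma cell_borel [measurable]: "cell G lo hi n l \<in> sets borel"
  unfolding cell_def by (cases "l = 1") (simp_all, measurable)

lemma vimage_ereal_Ioc_borel [measurable]: "ereal -` {c<..d} \<in> sets borel"
proof -
  have "ereal -` {c<..d} = {x. c < ereal x \<and> ereal x \<le> d}" by auto
  then show ?thesis by simp
qed

text \<open>Cell widths are measured after clipping the endpoints to the support [a,b]; this keeps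
  them finite when lo or hi is infinite.\<close>
definition clip :: "real \<Rightarrow> real \<Rightarrow> ereal \<Rightarrow> real" where
  "clip a b e = (case e of ereal x \<Rightarrow> max a (min b x) | PInfty \<Rightarrow> b | MInfty \<Rightarrow> a)"

lemma clip_bounds: "a \<le> b \<Longrightarrow> clip a b e \<in> {a..b}"
  by (cases e) (auto simp: clip_def)

lemma clip_mono: "a \<le> b \<Longrightarrow> e \<le> f \<Longrightarrow> clip a b e \<le> clip a b f"
  by (cases e; cases f) (auto simp: clip_def)

lemma clip_ereal: "x \<in> {a..b} \<Longrightarrow> clip a b (ereal x) = x"
  by (auto simp: clip_def)

lemma clip_le_real: "x \<in> {a..b} \<Longrightarrow> c \<le> ereal x \<Longrightarrow> clip a b c \<le> x"
  using clip_mono[of a b c "ereal x"] by (simp add: clip_ereal)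

lemma real_le_clip: "x \<in> {a..b} \<Longrightarrow> ereal x \<le> d \<Longrightarrow> x \<le> clip a b d"
  using clip_mono[of a b "ereal x" d] by (simp add: clip_ereal)

lemma ereal_le_clip: "c < ereal b \<Longrightarrow> c \<le> ereal (clip a b c)"
  by (cases c) (auto simp: clip_def)

lemma clip_le_ereal: "ereal a \<le> d \<Longrightarrow> ereal (clip a b d) \<le> d"
  by (cases d) (auto simp: clip_def)

lemma Ioc_clip_subset:
  "a \<le> b \<Longrightarrow> {clip a b c<..clip a b d} \<subseteq> ereal -` {c<..d}"
  by (cases c; cases d) (auto simp: clip_def)

lemma closed_Theta_set: "closed (Theta_set lo hi)"
proof -
  have "Theta_set lo hi = ereal -` {lo..hi}" by (auto simp: Theta_set_def)
  then show ?thesis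
    using closed_vimage[OF closed_atLeastAtMost continuous_on_ereal[OF continuous_on_id]] by simp
qed

lemma null_sets_compl_msupp:
  assumes sets_M: "sets M = sets borel"
  shows "UNIV - msupp M \<in> null_sets M"
proof -
  define F where "F = {ball x e | x e. emeasure M (ball x e) = 0}"
  have "\<Union>F = UNIV - msupp M"
  proof (rule sym, intro equalityI subsetI)
    fix y assume "y \<in> UNIV - msupp M"
    then obtain e where "e > 0" "emeasure M (ball y e) = 0"
      unfolding msupp_def by (auto simp: not_gr_zero)
    then show "y \<in> \<Union>F" unfolding F_def by force
  next
    fix y assume "y \<in> \<Union>F"
    then obtain x e where null: "emeasure M (ball x e) = 0" and "y \<in> ball x e"
      unfolding F_def by auto
    then obtain e' where "e' > 0" "ball y e' \<subseteq> ball x e"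
      using openE[OF open_ball] by metis
    with null have "emeasure M (ball y e') = 0"
      using emeasure_mono[of "ball y e'" "ball x e" M] sets_M by simp
    with \<open>e' > 0\<close> show "y \<in> UNIV - msupp M" unfolding msupp_def by force
  qed
  obtain F' where "F' \<subseteq> F" "countable F'" "\<Union>F' = \<Union>F"
    using Lindelof[of F] unfolding F_def by blast
  moreover have "F \<subseteq> null_sets M" unfolding F_def using sets_M by (auto intro: null_setsI)
  ultimately have "\<Union>F' \<in> null_sets M"
    using null_sets_UN'[of F' "\<lambda>S. S" M] by (simp add: subset_iff)
  with \<open>\<Union>F' = \<Union>F\<close> \<open>\<Union>F = UNIV - msupp M\<close> show ?thesis by simp
qed

lemma msupp_subset_closed:
  assumes "sets M = sets borel" "closed C" "emeasure M (UNIV - C) = 0"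
  shows "msupp M \<subseteq> C"
proof
  fix x assume x: "x \<in> msupp M"
  show "x \<in> C"
  proof (rule ccontr)
    assume "x \<notin> C"
    then obtain e where "e > 0" "ball x e \<subseteq> UNIV - C"
      using assms(2) by (metis Diff_iff UNIV_I open_Diff open_UNIV openE)
    then have "emeasure M (ball x e) = 0"
      using emeasure_mono[of "ball x e" "UNIV - C" M] assms by simp
    with x \<open>e > 0\<close> show False unfolding msupp_def by auto
  qed
qed

lemma wasserstein_distr_le:
  fixes M :: "real measure" and T :: "real \<Rightarrow> real"
  assumes "prob_space M" and sets_M: "sets M = sets borel" and T: "T \<in> borel_measurable M"
    and "0 < p" "0 \<le> \<eta>" and close: "AE x in M. \<bar>T x - x\<bar> \<le> \<eta>"
  shows "wasserstein p (distr M borel T) M \<le> ennreal \<eta>"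
proof -
  define f where "f x = (T x, x)" for x
  have f: "f \<in> M \<rightarrow>\<^sub>M (borel :: (real \<times> real) measure)"
    unfolding f_def borel_prod[symmetric] using T measurable_ident_sets[OF sets_M] by measurable
  have fst: "fst \<in> (borel :: (real \<times> real) measure) \<rightarrow>\<^sub>M borel"
   and snd: "snd \<in> (borel :: (real \<times> real) measure) \<rightarrow>\<^sub>M borel"
    unfolding borel_prod[symmetric] by measurable
  define \<pi> where "\<pi> = distr M borel f"
  define cost where "cost = (INF \<pi>\<in>couplings (distr M borel T) M.
    \<integral>\<^sup>+ z. ennreal (\<bar>fst z - snd z\<bar> powr p) \<partial>\<pi>)"
  have "\<pi> \<in> couplings (distr M borel T) M"
    using distr_distr[OF fst f] distr_distr[OF snd f] distr_id2[OF sets_M[symmetric]]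
    by (simp add: couplings_def \<pi>_def f_def comp_def)
  then have "cost \<le> (\<integral>\<^sup>+ z. ennreal (\<bar>fst z - snd z\<bar> powr p) \<partial>\<pi>)"
    unfolding cost_def by (rule INF_lower)
  also have "\<dots> = (\<integral>\<^sup>+ x. ennreal (\<bar>T x - x\<bar> powr p) \<partial>M)"
    unfolding \<pi>_def using f
    by (subst nn_integral_distr) (auto simp: f_def borel_prod[symmetric])
  also have "\<dots> \<le> (\<integral>\<^sup>+ x. ennreal (\<eta> powr p) \<partial>M)"
    using close
  proof (intro nn_integral_mono_AE, eventually_elim)
    case (elim x)
    then show ?case using \<open>0 < p\<close> by (intro ennreal_leI powr_mono2) auto
  qed
  also have "\<dots> = ennreal (\<eta> powr p)"
    using prob_space.emeasure_space_1[OF \<open>prob_space M\<close>] by simp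
  finally have cost_le: "cost \<le> ennreal (\<eta> powr p)" .
  have "enn2real cost \<le> \<eta> powr p"
    using enn2real_mono[OF cost_le] by simp
  then have "enn2real cost powr (1 / p) \<le> (\<eta> powr p) powr (1 / p)"
    using \<open>0 < p\<close> by (intro powr_mono2) auto
  also have "(\<eta> powr p) powr (1 / p) = \<eta>"
    using \<open>0 < p\<close> \<open>0 \<le> \<eta>\<close> by (simp add: powr_powr)
  finally have "ennreal (enn2real cost powr (1 / p)) \<le> ennreal \<eta>"
    by (rule ennreal_leI)
  moreover have "cost \<noteq> \<infinity>" using cost_le by (auto simp: top_unique)
  ultimately show ?thesis unfolding wasserstein_def Let_def cost_def[symmetric] by simp
qed

lemma measure_Ioc_uniform_lower_bound:
  fixes M :: "real measure"
  assumes "finite_measure M" "sets M = sets borel" "0 < h"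
    and pos: "\<And>s t. a \<le> s \<Longrightarrow> s < t \<Longrightarrow> t \<le> b \<Longrightarrow> 0 < measure M {s<..<t}"
  obtains g where "0 < g" "\<And>s. a \<le> s \<Longrightarrow> s + h \<le> b \<Longrightarrow> g \<le> measure M {s<..s + h}"
proof -
  txt \<open>Every interval of length h in [a,b] contains one of the finitely many grid intervals
    of length h/2 starting at a + k h/2.\<close>
  define t where "t k = a + real k * (h / 2)" for k :: nat
  define K where "K = {k. k \<le> nat \<lceil>2 * (b - a) / h\<rceil> \<and> t k + h / 2 \<le> b}"
  define g where "g = Min (insert 1 ((\<lambda>k. measure M {t k<..<t k + h / 2}) ` K))"
  have "finite K" unfolding K_def by simp
  have "0 < g"
    unfolding g_def using \<open>finite K\<close> \<open>0 < h\<close>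
    by (subst Min_gr_iff) (auto simp: K_def t_def intro!: pos)
  moreover have "g \<le> measure M {s<..s + h}" if s: "a \<le> s" "s + h \<le> b" for s
  proof -
    define k where "k = nat \<lceil>(s - a) / (h / 2)\<rceil>"
    have "real k = of_int \<lceil>(s - a) / (h / 2)\<rceil>"
      unfolding k_def using s \<open>0 < h\<close> by simp
    then have "(s - a) / (h / 2) \<le> real k" "real k < (s - a) / (h / 2) + 1"
      by linarith+
    then have tk: "s \<le> t k" "t k < s + h / 2"
      unfolding t_def using \<open>0 < h\<close> by (simp_all add: field_simps)
    then have "real k * (h / 2) < b - a" using s unfolding t_def by simp
    then have "real k < 2 * (b - a) / h" using \<open>0 < h\<close> by (simp add: field_simps)
    then have "k \<le> nat \<lceil>2 * (b - a) / h\<rceil>" by linarith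
    with tk s have "k \<in> K" by (simp add: K_def)
    then have "g \<le> measure M {t k<..<t k + h / 2}"
      unfolding g_def using \<open>finite K\<close> by (intro Min_le) auto
    also have "\<dots> \<le> measure M {s<..s + h}"
      using tk assms(1,2) by (intro finite_measure.finite_measure_mono) auto
    finally show ?thesis .
  qed
  ultimately show ?thesis using that by blast
qed

locale sba_measure = prob_space G for G :: "real measure" +
  fixes lo hi :: ereal and a b :: real
  assumes sets_G [measurable_cong]: "sets G = sets borel"
    and emeasure_Theta: "emeasure G (Theta_set lo hi) = 1"
    and a_less_b: "a < b"
    and msupp_G: "msupp G = {a..b}"
begin

lemma space_G [simp]: "space G = UNIV"
  using sets_eq_imp_space_eq[OF sets_G] by simp

lemma AE_support: "AE x in G. x \<in> {a..b}"
  using null_sets_compl_msupp[OF sets_G] msupp_G by (auto intro: AE_I')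

lemma exists_support_point:
  assumes "A \<in> sets borel" "0 < measure G A"
  shows "\<exists>x\<in>A. x \<in> {a..b}"
proof (rule ccontr)
  assume "\<not> ?thesis"
  then have "A \<subseteq> UNIV - msupp G" using msupp_G by auto
  then have "A \<in> null_sets G"
    using null_sets_subset[OF null_sets_compl_msupp[OF sets_G]] assms(1) sets_G by simp
  with assms(2) show False by (simp add: measure_def null_sets_def)
qed

lemma support_subset_Theta: "{a..b} \<subseteq> Theta_set lo hi"
proof -
  have Theta: "Theta_set lo hi \<in> sets G"
    using borel_closed[OF closed_Theta_set] sets_G by simp
  have "measure G (UNIV - Theta_set lo hi) = 0"
    using prob_compl[OF Theta] emeasure_Theta by (simp add: emeasure_eq_measure)
  then have "emeasure G (UNIV - Theta_set lo hi) = 0"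
    using Theta by (simp add: emeasure_eq_measure)
  then show ?thesis
    using msupp_subset_closed[OF sets_G closed_Theta_set] msupp_G by simp
qed

lemma measure_greaterThanLessThan_pos:
  assumes "a \<le> s" "s < t" "t \<le> b"
  shows "0 < measure G {s<..<t}"
proof -
  have "ball ((s + t) / 2) ((t - s) / 2) = {s<..<t}"
    by (simp add: ball_eq_greaterThanLessThan field_simps)
  moreover have "(s + t) / 2 \<in> msupp G" using assms msupp_G by simp
  ultimately have "0 < emeasure G {s<..<t}"
    unfolding msupp_def using assms(2)
    by (metis (mono_tags) diff_gt_0_iff_gt half_gt_zero mem_Collect_eq)
  then show ?thesis by (simp add: emeasure_eq_measure)
qed

lemma integrable_indicator_real: "A \<in> sets borel \<Longrightarrow> integrable G (indicator A :: real \<Rightarrow> real)"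
  using sets_G by (simp add: less_top[symmetric])

lemma integrable_bounded_on_support:
  fixes K :: real
  assumes "f \<in> borel_measurable borel" "\<And>x. x \<in> {a..b} \<Longrightarrow> \<bar>f x\<bar> \<le> K"
  shows "integrable G f"
proof (rule Bochner_Integration.integrable_bound[of G "\<lambda>_. K"])
  show "f \<in> borel_measurable G" using assms(1) by measurable
  show "AE x in G. norm (f x) \<le> norm K"
    using AE_support by eventually_elim (use assms(2) in fastforce)
qed simp

lemma measure_Ioc_eq_cdf:
  assumes "c \<le> d"
  shows "measure G (ereal -` {c<..d}) = cdf_e G d - cdf_e G c"
proof -
  have "{x. ereal x \<le> d} = {x. ereal x \<le> c} \<union> ereal -` {c<..d}"
    using assms by auto
  moreover have "{x. ereal x \<le> c} \<inter> ereal -` {c<..d} = {}" by auto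
  ultimately show ?thesis
    unfolding cdf_e_def
    using finite_measure_Union[of "{x. ereal x \<le> c}" "ereal -` {c<..d}"] sets_G by simp
qed

definition cond_mean :: "ereal \<Rightarrow> ereal \<Rightarrow> real" where
  "cond_mean c d = (\<integral>x. indicator (ereal -` {c<..d}) x * x \<partial>G) / measure G (ereal -` {c<..d})"

lemma bG_eq_cond_mean:
  assumes "c \<le> d"
  shows "bG G c d = (if 0 < measure G (ereal -` {c<..d}) then ereal (cond_mean c d) else c)"
proof -
  have "{x. c < ereal x \<and> ereal x \<le> d} = ereal -` {c<..d}" by auto
  then show ?thesis
    using measure_Ioc_eq_cdf[OF assms]
    by (simp add: bG_def cond_mean_def set_lebesgue_integral_def mult.commute)
qed

lemma integral_indicator_lower:
  assumes "S \<in> sets borel" "J \<in> sets borel" "J \<subseteq> S"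
    and "\<And>x. x \<in> S \<Longrightarrow> x \<in> {a..b} \<Longrightarrow> u \<le> x" and "\<And>x. x \<in> J \<Longrightarrow> u + \<delta> \<le> x"
  shows "u * measure G S + \<delta> * measure G J \<le> (\<integral>x. indicator S x * x \<partial>G)"
proof -
  have "u * measure G S + \<delta> * measure G J = (\<integral>x. u * indicator S x + \<delta> * indicator J x \<partial>G)"
    using assms(1,2) integrable_indicator_real sets_G by simp
  also have "\<dots> \<le> (\<integral>x. indicator S x * x \<partial>G)"
  proof (rule integral_mono_AE)
    show "integrable G (\<lambda>x. u * indicator S x + \<delta> * indicator J x)"
      using assms(1,2) integrable_indicator_real by simp
    show "integrable G (\<lambda>x. indicator S x * x)"
      using assms(1) by (intro integrable_bounded_on_support[where K = "\<bar>a\<bar> + \<bar>b\<bar>"])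
        (auto simp: indicator_def)
    show "AE x in G. u * indicator S x + \<delta> * indicator J x \<le> indicator S x * x"
      using AE_support
    proof eventually_elim
      case (elim x)
      then show ?case using assms(3) assms(4,5)[of x] by (auto simp: indicator_def)
    qed
  qed
  finally show ?thesis .
qed

lemma integral_indicator_upper:
  assumes "S \<in> sets borel" "J \<in> sets borel" "J \<subseteq> S"
    and "\<And>x. x \<in> S \<Longrightarrow> x \<in> {a..b} \<Longrightarrow> x \<le> v" and "\<And>x. x \<in> J \<Longrightarrow> x + \<delta> \<le> v"
  shows "(\<integral>x. indicator S x * x \<partial>G) + \<delta> * measure G J \<le> v * measure G S"
proof -
  have "(\<integral>x. indicator S x * x \<partial>G) \<le> (\<integral>x. v * indicator S x - \<delta> * indicator J x \<partial>G)"
  proof (rule integral_mono_AE)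
    show "integrable G (\<lambda>x. v * indicator S x - \<delta> * indicator J x)"
      using assms(1,2) integrable_indicator_real by simp
    show "integrable G (\<lambda>x. indicator S x * x)"
      using assms(1) by (intro integrable_bounded_on_support[where K = "\<bar>a\<bar> + \<bar>b\<bar>"])
        (auto simp: indicator_def)
    show "AE x in G. indicator S x * x \<le> v * indicator S x - \<delta> * indicator J x"
      using AE_support
    proof eventually_elim
      case (elim x)
      then show ?case using assms(3) assms(4,5)[of x] by (auto simp: indicator_def)
    qed
  qed
  also have "\<dots> = v * measure G S - \<delta> * measure G J"
    using assms(1,2) integrable_indicator_real sets_G by simp
  finally show ?thesis by simp
qed

lemma cond_mean_bounds:
  assumes "0 < measure G (ereal -` {c<..d})"
  shows "cond_mean c d \<in> {clip a b c..clip a b d}"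
proof -
  let ?S = "ereal -` {c<..d}"
  have "clip a b c \<le> x" "x \<le> clip a b d" if "x \<in> ?S" "x \<in> {a..b}" for x
    using that by (auto intro: clip_le_real real_le_clip)
  then have "clip a b c * measure G ?S \<le> (\<integral>x. indicator ?S x * x \<partial>G)"
    and "(\<integral>x. indicator ?S x * x \<partial>G) \<le> clip a b d * measure G ?S"
    using integral_indicator_lower[of ?S "{}" "clip a b c" 0]
      integral_indicator_upper[of ?S "{}" "clip a b d" 0] by auto
  with assms show ?thesis
    by (simp add: cond_mean_def pos_le_divide_eq pos_divide_le_eq)
qed

lemma bG_between:
  assumes "c \<le> d"
  shows "c \<le> bG G c d \<and> bG G c d \<le> d"
proof (cases "0 < measure G (ereal -` {c<..d})")
  case True
  then obtain x where "c < ereal x" "ereal x \<le> d" "x \<in> {a..b}"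
    using exists_support_point[of "ereal -` {c<..d}"] by auto
  then have "c < ereal b" "ereal a \<le> d"
    using less_le_trans[of c "ereal x"] order_trans[of "ereal a" "ereal x" d] by auto
  then have "c \<le> ereal (clip a b c)" "ereal (clip a b d) \<le> d"
    by (simp_all add: ereal_le_clip clip_le_ereal)
  moreover have "ereal (clip a b c) \<le> ereal (cond_mean c d)"
    "ereal (cond_mean c d) \<le> ereal (clip a b d)"
    using cond_mean_bounds[OF True] by auto
  ultimately show ?thesis
    using True bG_eq_cond_mean[OF assms] by (metis order_trans)
next
  case False
  then show ?thesis using bG_eq_cond_mean[OF assms] assms by simp
qed

lemma integral_id_in_support: "(\<integral>x. x \<partial>G) \<in> {a..b}"
proof -
  have "ereal -` {-\<infinity><..\<infinity>} = UNIV" by auto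
  moreover have "measure G UNIV = 1" using prob_space by simp
  ultimately have "cond_mean (-\<infinity>) \<infinity> = (\<integral>x. x \<partial>G)"
    "0 < measure G (ereal -` {-\<infinity><..\<infinity>})"
    by (simp_all add: cond_mean_def)
  then show ?thesis using cond_mean_bounds[of "-\<infinity>" \<infinity>] by (simp add: clip_def)
qed

lemma mono_sba:
  assumes "1 \<le> n"
  shows "mono (sba G lo hi n)"
  unfolding mono_iff_le_Suc using assms
proof (induction n rule: nat_induct_at_least)
  case base
  have "lo \<le> ereal (\<integral>x. x \<partial>G) \<and> ereal (\<integral>x. x \<partial>G) \<le> hi"
    using integral_id_in_support support_subset_Theta by (auto simp: Theta_set_def)
  then show ?case by simp
next
  case (Suc n)
  show ?case
  proof
    fix l
    show "sba G lo hi (Suc n) l \<le> sba G lo hi (Suc n) (Suc l)"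
    proof (cases "l < 2 ^ Suc n")
      case True
      then obtain k where "k < 2 ^ n"
        and split: "(sba G lo hi (Suc n) l, sba G lo hi (Suc n) (Suc l)) \<in>
           {(sba G lo hi n k, bG G (sba G lo hi n k) (sba G lo hi n (Suc k))),
            (bG G (sba G lo hi n k) (sba G lo hi n (Suc k)), sba G lo hi n (Suc k))}"
        by (rule sba_Suc_split[OF Suc.hyps])
      then show ?thesis using Suc.IH bG_between by auto
    next
      case False
      then show ?thesis using sba_top[of "Suc n" l] sba_top[of "Suc n" "Suc l"] by simp
    qed
  qed
qed

lemma cell_disjoint:
  assumes "1 \<le> n"
  shows "disjoint_family_on (cell G lo hi n) {1..}"
proof -
  have "cell G lo hi n l \<inter> cell G lo hi n l' = {}" if "1 \<le> l" "l < l'" for l l'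
  proof (intro equals0I)
    fix x assume "x \<in> cell G lo hi n l \<inter> cell G lo hi n l'"
    with that have "ereal x \<le> sba G lo hi n l" "sba G lo hi n (l' - 1) < ereal x"
      by (auto simp: cell_def split: if_splits)
    moreover have "sba G lo hi n l \<le> sba G lo hi n (l' - 1)"
      using that monoD[OF mono_sba[OF assms]] by simp
    ultimately show False by simp
  qed
  then show ?thesis
    unfolding disjoint_family_on_def by (metis Int_commute atLeast_iff linorder_neqE_nat)
qed

lemma Theta_eq_UN_cell:
  assumes "1 \<le> n"
  shows "Theta_set lo hi = (\<Union>l\<in>{1..2 ^ n}. cell G lo hi n l)"
proof (intro equalityI subsetI)
  fix x assume "x \<in> Theta_set lo hi"
  then have lo: "lo \<le> ereal x" and hi: "ereal x \<le> sba G lo hi n (2 ^ n)"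
    using sba_top[OF assms] by (auto simp: Theta_set_def)
  define l where "l = (LEAST l. ereal x \<le> sba G lo hi n l)"
  have x_le: "ereal x \<le> sba G lo hi n l" and "l \<le> 2 ^ n"
    using LeastI[of "\<lambda>l. ereal x \<le> sba G lo hi n l", OF hi]
      Least_le[of "\<lambda>l. ereal x \<le> sba G lo hi n l", OF hi] by (simp_all add: l_def)
  show "x \<in> (\<Union>l\<in>{1..2 ^ n}. cell G lo hi n l)"
  proof (cases "l \<le> 1")
    case True
    then have "ereal x \<le> sba G lo hi n 1" using x_le monoD[OF mono_sba[OF assms], of l 1] by simp
    with lo have "x \<in> cell G lo hi n 1" by (simp add: cell_def)
    then show ?thesis by force
  next
    case False
    then have "\<not> ereal x \<le> sba G lo hi n (l - 1)"
      using not_less_Least[of "l - 1" "\<lambda>l. ereal x \<le> sba G lo hi n l"] by (simp add: l_def)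
    with x_le False have "x \<in> cell G lo hi n l" by (simp add: cell_def)
    with False \<open>l \<le> 2 ^ n\<close> show ?thesis by force
  qed
next
  fix x assume "x \<in> (\<Union>l\<in>{1..2 ^ n}. cell G lo hi n l)"
  then obtain l where "l \<in> {1..2 ^ n}" "x \<in> cell G lo hi n l" by blast
  then have "sba G lo hi n 0 \<le> sba G lo hi n (l - 1)" "sba G lo hi n (l - 1) \<le> ereal x"
    "ereal x \<le> sba G lo hi n l" "sba G lo hi n l \<le> sba G lo hi n (2 ^ n)"
    using cell_bounds[of x G lo hi n l] monoD[OF mono_sba[OF assms], of 0 "l - 1"]
      monoD[OF mono_sba[OF assms], of l "2 ^ n"] by auto
  then have "sba G lo hi n 0 \<le> ereal x" "ereal x \<le> sba G lo hi n (2 ^ n)"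
    by (meson order_trans)+
  then show "x \<in> Theta_set lo hi" using sba_top[OF assms] by (simp add: Theta_set_def)
qed

lemma emeasure_barcell: "emeasure G (barcell G lo hi n l) = emeasure G (cell G lo hi n l)"
proof -
  have "cell G lo hi n l \<inter> msupp G = cell G lo hi n l - (UNIV - msupp G)" by auto
  then show ?thesis
    unfolding barcell_def using emeasure_Diff_null_set[OF null_sets_compl_msupp[OF sets_G]] sets_G
    by simp
qed

definition quantizer :: "nat \<Rightarrow> real \<Rightarrow> real" where
  "quantizer n x = (\<Sum>l\<in>{1..2 ^ n}.
     indicator (cell G lo hi n l) x * real_of_ereal (sba G lo hi (Suc n) (2 * l - 1)))"

lemma quantizer_borel [measurable]: "quantizer n \<in> borel_measurable borel"
  unfolding quantizer_def by measurable

lemma quantizer_cell: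
  assumes "1 \<le> n" "l \<in> {1..2 ^ n}" "x \<in> cell G lo hi n l"
  shows "quantizer n x = real_of_ereal (sba G lo hi (Suc n) (2 * l - 1))"
proof -
  have "indicator (cell G lo hi n l') x = (if l' = l then 1 else 0 :: real)" if "l' \<in> {1..2 ^ n}" for l'
    using cell_disjoint[OF assms(1)] assms(2,3) that
    unfolding disjoint_family_on_def by (auto simp: indicator_def)
  then have "quantizer n x = (\<Sum>l'\<in>{1..2 ^ n}.
      if l' = l then real_of_ereal (sba G lo hi (Suc n) (2 * l' - 1)) else 0)"
    unfolding quantizer_def by (intro sum.cong) auto
  then show ?thesis using assms(2) by simp
qed

lemma null_sets_compl_Theta: "UNIV - Theta_set lo hi \<in> null_sets G"
proof -
  have "UNIV - Theta_set lo hi \<in> sets borel" using borel_closed[OF closed_Theta_set] by auto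
  moreover have "UNIV - Theta_set lo hi \<subseteq> UNIV - msupp G"
    using support_subset_Theta msupp_G by auto
  ultimately show ?thesis
    using null_sets_subset[OF null_sets_compl_msupp[OF sets_G]] sets_G by simp
qed

lemma emeasure_distr_quantizer:
  assumes "1 \<le> n" and A: "A \<in> sets borel"
  shows "emeasure (distr G borel (quantizer n)) A = (\<Sum>l\<in>{1..2 ^ n}.
    emeasure G (barcell G lo hi n l) * indicator A (real_of_ereal (sba G lo hi (Suc n) (2 * l - 1))))"
proof -
  let ?pt = "\<lambda>l. real_of_ereal (sba G lo hi (Suc n) (2 * l - 1))"
  let ?X = "quantizer n -` A"
  have X: "?X \<in> sets G" using measurable_sets_borel[OF quantizer_borel A] sets_G by simp
  have quantizer_G: "quantizer n \<in> G \<rightarrow>\<^sub>M borel" by measurable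
  have "emeasure (distr G borel (quantizer n)) A = emeasure G (?X - (UNIV - Theta_set lo hi))"
    using emeasure_distr[OF quantizer_G A] emeasure_Diff_null_set[OF null_sets_compl_Theta X]
    by simp
  also have "?X - (UNIV - Theta_set lo hi) = (\<Union>l\<in>{1..2 ^ n}. ?X \<inter> cell G lo hi n l)"
    using Theta_eq_UN_cell[OF assms(1)] by auto
  also have "emeasure G \<dots> = (\<Sum>l\<in>{1..2 ^ n}. emeasure G (?X \<inter> cell G lo hi n l))"
  proof (rule sum_emeasure[symmetric])
    show "disjoint_family_on (\<lambda>l. ?X \<inter> cell G lo hi n l) {1..2 ^ n}"
      by (rule disjoint_family_on_bisimulation[OF
            disjoint_family_on_mono[OF _ cell_disjoint[OF assms(1)]]]) auto
    show "(\<lambda>l. ?X \<inter> cell G lo hi n l) ` {1..2 ^ n} \<subseteq> sets G"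
      using X by (auto intro!: sets.Int simp: sets_G)
  qed simp
  also have "\<dots> = (\<Sum>l\<in>{1..2 ^ n}. emeasure G (barcell G lo hi n l) * indicator A (?pt l))"
  proof (rule sum.cong[OF refl])
    fix l :: nat assume l: "l \<in> {1..2 ^ n}"
    then have "?X \<inter> cell G lo hi n l = (if ?pt l \<in> A then cell G lo hi n l else {})"
      using quantizer_cell[OF assms(1) l] by auto
    then show "emeasure G (?X \<inter> cell G lo hi n l) =
        emeasure G (barcell G lo hi n l) * indicator A (?pt l)"
      by (simp add: emeasure_barcell indicator_def)
  qed
  finally show ?thesis .
qed

lemma approx_meas_eq_distr:
  assumes "1 \<le> n"
  shows "approx_meas G lo hi n = distr G borel (quantizer n)"
proof -
  have "approx_meas G lo hi n = measure_of UNIV (sets borel) (emeasure (distr G borel (quantizer n)))"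
    unfolding approx_meas_def using emeasure_distr_quantizer[OF assms]
    by (intro measure_of_eq) (simp_all add: sets.sigma_sets_eq[of borel, simplified])
  also have "\<dots> = distr G borel (quantizer n)"
    using measure_of_of_measure[of "distr G borel (quantizer n)"] by simp
  finally show ?thesis .
qed

definition width :: "ereal \<Rightarrow> ereal \<Rightarrow> real" where
  "width c d = clip a b d - clip a b c"

lemma width_le: "width c d \<le> b - a"
  using clip_bounds[of a b c] clip_bounds[of a b d] a_less_b by (simp add: width_def)

lemma width_nonneg: "c \<le> d \<Longrightarrow> 0 \<le> width c d"
  using clip_mono[of a b c d] a_less_b by (simp add: width_def)

lemma quantizer_dist_le_width:
  assumes "1 \<le> n" "l < 2 ^ n" and x: "x \<in> {a..b}" "x \<in> cell G lo hi n (Suc l)"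
    and null: "measure G (ereal -` {sba G lo hi n l<..sba G lo hi n (Suc l)}) = 0 \<Longrightarrow>
      x \<notin> ereal -` {sba G lo hi n l<..sba G lo hi n (Suc l)}"
  shows "\<bar>quantizer n x - x\<bar> \<le> width (sba G lo hi n l) (sba G lo hi n (Suc l))"
proof -
  define c where "c = sba G lo hi n l"
  define d where "d = sba G lo hi n (Suc l)"
  have x_cd: "c \<le> ereal x" "ereal x \<le> d" using cell_bounds[OF x(2)] by (simp_all add: c_def d_def)
  then have cd: "c \<le> d" by (rule order_trans)
  have "2 * Suc l - 1 = Suc (2 * l)" by simp
  then have q: "quantizer n x = real_of_ereal (bG G c d)"
    using quantizer_cell[OF assms(1) _ x(2)] sba_Suc_odd[OF assms(1,2)] assms(2)
    by (simp add: c_def d_def)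
  show ?thesis
  proof (cases "0 < measure G (ereal -` {c<..d})")
    case True
    then have "quantizer n x = cond_mean c d" "cond_mean c d \<in> {clip a b c..clip a b d}"
      using q bG_eq_cond_mean[OF cd] cond_mean_bounds[of c d] by simp_all
    moreover have "x \<in> {clip a b c..clip a b d}"
      using x(1) x_cd by (auto intro: clip_le_real real_le_clip)
    ultimately show ?thesis by (auto simp: width_def c_def d_def)
  next
    case False
    txt \<open>On a null cell bG returns the left endpoint, and by hypothesis x is that endpoint.\<close>
    then have "measure G (ereal -` {c<..d}) = 0"
      using measure_nonneg[of G] by (metis less_eq_real_def)
    then have "\<not> c < ereal x" using null x_cd by (auto simp: c_def d_def)
    then have "ereal x = c" using x_cd by simp
    moreover have "quantizer n x = real_of_ereal c"
      using q bG_eq_cond_mean[OF cd] False by simp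
    ultimately have "quantizer n x = x" by (metis real_of_ereal.simps(1))
    then show ?thesis using width_nonneg[OF cd] by (simp add: c_def d_def)
  qed
qed

lemma quantizer_close:
  assumes "1 \<le> n"
    and W: "\<And>l. l < 2 ^ n \<Longrightarrow> width (sba G lo hi n l) (sba G lo hi n (Suc l)) \<le> W"
  shows "AE x in G. \<bar>quantizer n x - x\<bar> \<le> W"
proof -
  let ?S = "\<lambda>l. ereal -` {sba G lo hi n l<..sba G lo hi n (Suc l)}"
  have "AE x in G. \<forall>l\<in>{..<2 ^ n}. measure G (?S l) = 0 \<longrightarrow> x \<notin> ?S l"
  proof (rule AE_finite_allI)
    fix l
    show "AE x in G. measure G (?S l) = 0 \<longrightarrow> x \<notin> ?S l"
    proof (cases "measure G (?S l) = 0")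
      case True
      then have "?S l \<in> null_sets G"
        using sets_G by (simp add: null_sets_def emeasure_eq_measure)
      then have "AE x in G. x \<notin> ?S l" by (rule AE_not_in)
      then show ?thesis by eventually_elim simp
    qed simp
  qed simp
  then show ?thesis
    using AE_support
  proof eventually_elim
    case (elim x)
    then obtain l' where l': "l' \<in> {1..2 ^ n}" "x \<in> cell G lo hi n l'"
      using support_subset_Theta Theta_eq_UN_cell[OF assms(1)] by blast
    then have "l' - 1 < 2 ^ n" "Suc (l' - 1) = l'" by auto
    then show ?case
      using quantizer_dist_le_width[OF assms(1), of "l' - 1" x] W[of "l' - 1"] elim l'(2) by force
  qed
qed

context
  fixes \<eta> g :: real
  assumes \<eta>_pos: "0 < \<eta>" and g_pos: "0 < g"
    and mass: "\<And>s. a \<le> s \<Longrightarrow> s + \<eta> / 2 \<le> b \<Longrightarrow> g \<le> measure G {s<..s + \<eta> / 2}"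
begin

lemma cond_mean_gap:
  assumes wide: "clip a b c + \<eta> \<le> clip a b d"
  shows "0 < measure G (ereal -` {c<..d})"
    and "\<eta> / 2 * g \<le> cond_mean c d - clip a b c"
    and "\<eta> / 2 * g \<le> clip a b d - cond_mean c d"
proof -
  let ?S = "ereal -` {c<..d}" and ?c = "clip a b c" and ?d = "clip a b d"
  let ?J1 = "{?c<..?c + \<eta> / 2}" and ?J2 = "{?d - \<eta> / 2<..?d}"
  have ab: "?c \<in> {a..b}" "?d \<in> {a..b}" using clip_bounds a_less_b by simp_all
  have "{?c<..?d} \<subseteq> ?S" using Ioc_clip_subset a_less_b by simp
  then have J_S: "?J1 \<subseteq> ?S" "?J2 \<subseteq> ?S" using wide \<eta>_pos by auto
  have g_J: "g \<le> measure G ?J1" "g \<le> measure G ?J2"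
    using mass[of ?c] mass[of "?d - \<eta> / 2"] ab wide by simp_all
  have S_ge: "clip a b c \<le> x" "x \<le> clip a b d" if "x \<in> ?S" "x \<in> {a..b}" for x
    using that by (auto intro: clip_le_real real_le_clip)
  have "measure G ?J2 \<le> measure G ?S" using J_S by (intro finite_measure_mono) (auto simp: sets_G)
  then show pos: "0 < measure G ?S" using g_J g_pos by linarith
  define I where "I = (\<integral>x. indicator ?S x * x \<partial>G)"
  have cm: "measure G ?S * (cond_mean c d - ?c) = I - ?c * measure G ?S"
    "measure G ?S * (?d - cond_mean c d) = ?d * measure G ?S - I"
    using pos by (simp_all add: cond_mean_def I_def field_simps)
  have "?c * measure G ?S + \<eta> / 2 * measure G ?J2 \<le> I"
    unfolding I_def using J_S wide S_ge by (intro integral_indicator_lower) auto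
  moreover have "I + \<eta> / 2 * measure G ?J1 \<le> ?d * measure G ?S"
    unfolding I_def using J_S wide S_ge by (intro integral_indicator_upper) auto
  moreover have "\<eta> / 2 * g \<le> \<eta> / 2 * measure G ?J1" "\<eta> / 2 * g \<le> \<eta> / 2 * measure G ?J2"
    using g_J \<eta>_pos by simp_all
  ultimately have "\<eta> / 2 * g \<le> measure G ?S * (cond_mean c d - ?c)"
    "\<eta> / 2 * g \<le> measure G ?S * (?d - cond_mean c d)"
    unfolding cm by linarith+
  moreover have "\<eta> / 2 * g \<le> t" if "\<eta> / 2 * g \<le> measure G ?S * t" for t
  proof -
    have "0 < measure G ?S * t" using that mult_pos_pos[OF \<eta>_pos g_pos] by linarith
    then have "0 < t" by (rule zero_less_mult_pos[OF _ pos])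
    then have "measure G ?S * t \<le> t" by (intro mult_left_le_one_le) auto
    with that show ?thesis by linarith
  qed
  ultimately show "\<eta> / 2 * g \<le> cond_mean c d - ?c" "\<eta> / 2 * g \<le> ?d - cond_mean c d"
    by blast+
qed

lemma width_bisect:
  assumes "c \<le> d"
  shows "max (width c (bG G c d)) (width (bG G c d) d) \<le> max \<eta> (width c d - \<eta> / 2 * g)"
proof (cases "clip a b c + \<eta> \<le> clip a b d")
  case True
  note gap = cond_mean_gap[OF True]
  have "bG G c d = ereal (cond_mean c d)" using bG_eq_cond_mean[OF assms] gap(1) by simp
  moreover have "clip a b (ereal (cond_mean c d)) = cond_mean c d"
    using cond_mean_bounds[OF gap(1)] clip_bounds[of a b] a_less_b
    by (intro clip_ereal) (meson atLeastAtMost_iff order_trans less_imp_le)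
  ultimately have "width c (bG G c d) \<le> width c d - \<eta> / 2 * g"
    "width (bG G c d) d \<le> width c d - \<eta> / 2 * g"
    using gap(2,3) by (simp_all add: width_def)
  then show ?thesis by (simp add: le_max_iff_disj)
next
  case False
  have "clip a b c \<le> clip a b (bG G c d)" "clip a b (bG G c d) \<le> clip a b d"
    using bG_between[OF assms] clip_mono a_less_b by simp_all
  with False show ?thesis by (simp add: width_def le_max_iff_disj)
qed

lemma width_sba_le:
  "l < 2 ^ Suc n \<Longrightarrow>
    width (sba G lo hi (Suc n) l) (sba G lo hi (Suc n) (Suc l))
      \<le> max \<eta> (b - a - real n * (\<eta> / 2 * g))"
proof (induction n arbitrary: l)
  case 0
  show ?case by (rule max.coboundedI2) (simp add: width_le)
next
  case (Suc n)
  obtain k where k: "k < 2 ^ Suc n"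
    and split: "(sba G lo hi (Suc (Suc n)) l, sba G lo hi (Suc (Suc n)) (Suc l)) \<in>
      {(sba G lo hi (Suc n) k, bG G (sba G lo hi (Suc n) k) (sba G lo hi (Suc n) (Suc k))),
       (bG G (sba G lo hi (Suc n) k) (sba G lo hi (Suc n) (Suc k)), sba G lo hi (Suc n) (Suc k))}"
    by (rule sba_Suc_split[OF _ Suc.prems]) simp
  let ?c = "sba G lo hi (Suc n) k" and ?d = "sba G lo hi (Suc n) (Suc k)"
  have "width (sba G lo hi (Suc (Suc n)) l) (sba G lo hi (Suc (Suc n)) (Suc l))
      \<le> max (width ?c (bG G ?c ?d)) (width (bG G ?c ?d) ?d)"
    using split by (auto simp del: sba.simps)
  also have "\<dots> \<le> max \<eta> (width ?c ?d - \<eta> / 2 * g)"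
    using monoD[OF mono_sba] by (intro width_bisect) simp
  also have "\<dots> \<le> max \<eta> (b - a - real n * (\<eta> / 2 * g) - \<eta> / 2 * g)"
    using Suc.IH[OF k] mult_pos_pos[OF \<eta>_pos g_pos] by (auto simp: max_def split: if_splits)
  also have "b - a - real n * (\<eta> / 2 * g) - \<eta> / 2 * g = b - a - real (Suc n) * (\<eta> / 2 * g)"
    by (simp add: algebra_simps)
  finally show ?case .
qed

end

lemma width_sba_small:
  assumes "0 < \<eta>"
  obtains n where "1 \<le> n" "\<And>l. l < 2 ^ n \<Longrightarrow> width (sba G lo hi n l) (sba G lo hi n (Suc l)) \<le> \<eta>"
proof -
  obtain g where g: "0 < g" "\<And>s. a \<le> s \<Longrightarrow> s + \<eta> / 2 \<le> b \<Longrightarrow> g \<le> measure G {s<..s + \<eta> / 2}"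
    using measure_Ioc_uniform_lower_bound[OF finite_measure_axioms sets_G, of "\<eta> / 2" a b]
      measure_greaterThanLessThan_pos assms by auto
  obtain N :: nat where "(b - a) / (\<eta> / 2 * g) \<le> N" using real_arch_simple by blast
  then have N: "b - a - real N * (\<eta> / 2 * g) \<le> \<eta>"
    using assms g(1) a_less_b by (simp add: field_simps)
  show ?thesis
  proof (rule that[of "Suc N"])
    fix l :: nat assume "l < 2 ^ Suc N"
    then have "width (sba G lo hi (Suc N) l) (sba G lo hi (Suc N) (Suc l))
        \<le> max \<eta> (b - a - real N * (\<eta> / 2 * g))"
      using width_sba_le[OF assms g(1) g(2)] by blast
    with N show "width (sba G lo hi (Suc N) l) (sba G lo hi (Suc N) (Suc l)) \<le> \<eta>" by simp
  qed simp
qed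

end

theorem lemma7:
  fixes p :: real and lo hi :: ereal and G :: "real measure" and \<epsilon> :: real
  assumes "lo < hi"
    and "1 \<le> p"
    and "G \<in> Pstar lo hi"
    and "\<epsilon> > 0"
  shows "\<exists>n\<ge>1. wasserstein p (approx_meas G lo hi n) G < ennreal \<epsilon>"
proof -
  obtain a b where "prob_space G" "sets G = sets borel" "emeasure G (Theta_set lo hi) = 1"
    "a < b" "msupp G = {a..b}"
    using assms(3) unfolding Pstar_def by auto
  then interpret sba_measure G lo hi a b
    by (simp add: sba_measure_def sba_measure_axioms_def)
  obtain n where n: "1 \<le> n"
    and widths: "\<And>l. l < 2 ^ n \<Longrightarrow> width (sba G lo hi n l) (sba G lo hi n (Suc l)) \<le> \<epsilon> / 2"
    using width_sba_small[of "\<epsilon> / 2"] assms(4) by auto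
  have "wasserstein p (approx_meas G lo hi n) G \<le> ennreal (\<epsilon> / 2)"
    unfolding approx_meas_eq_distr[OF n]
    using quantizer_close[OF n widths] assms(2,4)
    by (intro wasserstein_distr_le[OF prob_space_axioms sets_G]) simp_all
  also have "\<dots> < ennreal \<epsilon>" using assms(4) by (simp add: ennreal_lessI)
  finally show ?thesis using n by blast
qed

end
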